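(* Let $\epsilon\in\{-1,0,1\}$, $f\in L^2(\Omega)$, and let $\mathbf u_h=(u_h,\hat u_h)\in\mathbf V_h$ be a solution of the H-IP problem. Then for all $\mathbf v_h=(v_h,\hat v_h)\in\mathbf V_h$, $$\langle\sigma(v_h),[\![\mathbf u_h]\!]\rangle_{\partial\mathcal T_h}=-\langle\{\kappa\nabla_hv_h\}^*_{\omega^\tau},[u_h]\rangle_{\mathcal F_h}-\langle\varrho_1[\kappa\nabla_hu_h],[\kappa\nabla_hv_h]\rangle_{\mathcal F_h^i},$$ $$\langle\hat\sigma(\mathbf u_h),[\![\mathbf v_h]\!]\rangle_{\partial\mathcal T_h}=-\langle\{\kappa\nabla_hu_h\}^*_{\omega^\tau},[v_h]\rangle_{\mathcal F_h}+\langle\varrho_0[u_h],[v_h]\rangle_{\mathcal F_h}.$$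
   Context: Setting. Let $\Omega\subset\mathbb R^d$, $d\in\{2,3\}$, be a bounded polyhedral Lipschitz domain. Let $\kappa:\Omega\to\mathbb R^{d\times d}$ be symmetric with $\kappa_{\min}|\xi|^2\le\xi^\top\kappa(x)\xi\le\kappa_{\max}|\xi|^2$ for all $\xi\in\mathbb R^d$ and a.e. $x$, where $0<\kappa_{\min}\le\kappa_{\max}<\infty$. Let $\mathcal T_h$ be a conforming affine simplicial mesh of $\Omega$ from a shape-regular family, with $h_E=\operatorname{diam}E$, $h=\max_Eh_E\le1$, and assume $\kappa$ is constant on each element, $\kappa_E:=\kappa|_E$. $\mathcal F_h=\mathcal F_h^i\cup\mathcal F_h^b$ is the set of faces (edges if $d=2$), split into interior and boundary faces; $\mathcal F_E$ is the set of faces of $E$, $n_{E,F}$ the unit outward normal to $F\in\mathcal F_E$, and $\eta_0:=\max_E\#\mathcal F_E$. For an interior face $F=\partial E_1\cap\partial E_2$, a subscript $i\in\{1,2\}$ denotes the trace from $E_i$ and $n_i:=n_{E_i,F}$. $\nabla_h$ is the elementwise gradient; $(\cdot,\cdot)_{\mathcal T_h}:=\sum_E(\cdot,\cdot)_{L^2(E)}$, $\langle\cdot,\cdot\rangle_{\partial\mathcal T_h}:=\sum_E\sum_{F\in\mathcal F_E}\langle\cdot,\cdot\rangle_{L^2(F)}$ (traces from $E$), $\langle\cdot,\cdot\rangle_{\mathcal F}:=\sum_{F\in\mathcal F}\langle\cdot,\cdot\rangle_{L^2(F)}$ for a set $\mathcal F$ of faces. Fix $k\ge1$: $V_h:=\{v\in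 L^2(\Omega):v|_E\in\mathbb P_k(E)\ \forall E\}$, $\hat V_h:=\{\hat v\in L^2(\bigcup_{F\in\mathcal F_h}F):\hat v|_F\in\mathbb P_k(F)\ \forall F,\ \hat v|_F=0\ \forall F\in\mathcal F_h^b\}$, $\mathbf V_h:=V_h\times\hat V_h$ ($\mathbb P_k$ = polynomials of total degree $\le k$). Trace operators. For an interior face and a pair of weights $(\omega_1,\omega_2)$ with $\omega_1+\omega_2=1$ (boundary faces: $(1,0)$): $[\varphi]:=\varphi_1n_1+\varphi_2n_2$, $\{\varphi\}_\omega:=\omega_1\varphi_1+\omega_2\varphi_2$, $\{\varphi\}^*_\omega:=\omega_2\varphi_1+\omega_1\varphi_2$; on a boundary face $F\subset\partial E$: $[\varphi]:=\varphi|_En_{E,F}$, $\{\varphi\}_\omega=\{\varphi\}^*_\omega:=\varphi|_E$. Means of vector fields are componentwise; for a vector field $\mathbf b$, $[\mathbf b]:=\mathbf b_1\cdot n_1+\mathbf b_2\cdot n_2$ (scalar) on interior faces. HDG jump: $[\![(\varphi,\hat\varphi)]\!]|_{E,F}:=(\varphi|_E-\hat\varphi)n_{E,F}$ for $F\in\mathcal F_E$. Penalty and coefficients. Let $C_T>0$ be such that $\|w\|_{L^2(F)}^2\le C_T^2h_E^{-1}\|w\|_{L^2(E)}^2$ for all $E$, $F\in\mathcal F_E$, $w\in\mathbb P_k(E)$. Fix $\alpha_0>0$ and set $\tau|_{E,F}:=\alpha_0C_T^2\kappa_{E,F}h_E^{-1}$ with $\kappa_{E,F}:=n_{E,F}^\top\kappa_En_{E,F}$.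 On an interior face with $\tau_i:=\tau|_{E_i,F}$: $\omega^\tau_i:=\tau_i/(\tau_1+\tau_2)$, $\varrho_0:=\tau_1\tau_2/(\tau_1+\tau_2)$, $\varrho_1:=1/(\tau_1+\tau_2)$; on a boundary face $F\subset\partial E$: $\omega^\tau:=(1,0)$, $\varrho_0:=\tau|_{E,F}$. H-IP method. For $\epsilon\in\{-1,0,1\}$, $\sigma(v):=-\kappa\nabla_hv$, and for $\mathbf u=(u,\hat u)\in\mathbf V_h$, $\hat\sigma(\mathbf u):=\sigma(u)+\tau[\![\mathbf u]\!]$ on $\partial\mathcal T_h$ (double-valued). $\mathbf a_h^{(\epsilon)}(\mathbf u,\mathbf v):=(\kappa\nabla_hu,\nabla_hv)_{\mathcal T_h}+\langle\hat\sigma(\mathbf u),[\![\mathbf v]\!]\rangle_{\partial\mathcal T_h}+\epsilon\langle\sigma(v),[\![\mathbf u]\!]\rangle_{\partial\mathcal T_h}$ for $\mathbf u=(u,\hat u),\mathbf v=(v,\hat v)\in\mathbf V_h$. The H-IP problem: find $\mathbf u_h\in\mathbf V_h$ with $\mathbf a_h^{(\epsilon)}(\mathbf u_h,\mathbf v_h)=(f,v_h)_{\mathcal T_h}$ for all $\mathbf v_h=(v_h,\hat v_h)\in\mathbf V_h$. *)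

theory Defs
  imports "HOL-Analysis.Analysis"
begin

text \<open>An element is represented by its vertex set (a set of
  d+1 affinely independent points of real^'d); the element itself is its convex hull.\<close>

definition faces :: "(real^'d) set \<Rightarrow> (real^'d) set set" where
  "faces E = {E - {p} | p. p \<in> E}"

definition Fh :: "(real^'d) set set \<Rightarrow> (real^'d) set set" where
  "Fh T = (\<Union>E\<in>T. faces E)"

definition elems :: "(real^'d) set set \<Rightarrow> (real^'d) set \<Rightarrow> (real^'d) set set" where
  "elems T F = {E \<in> T. F \<in> faces E}"

definition Fi :: "(real^'d) set set \<Rightarrow> (real^'d) set set" where
  "Fi T = {F \<in> Fh T. card (elems T F) = 2}"

definition Fb :: "(real^'d) set set \<Rightarrow> (real^'d) set set" where
  "Fb T = {F \<in> Fh T. card (elems T F) = 1}"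

definition nrm :: "(real^'d) set \<Rightarrow> (real^'d) set \<Rightarrow> real^'d" where
  "nrm E F = (THE n. norm n = 1 \<and> (\<forall>p\<in>F. \<forall>q\<in>F. n \<bullet> (p - q) = 0)
                    \<and> (\<forall>p\<in>F. \<forall>q\<in>E - F. n \<bullet> (q - p) < 0))"

text \<open>A (sign-free) unit normal of a face, used only to define the surface integral.\<close>
definition fnrm :: "(real^'d) set \<Rightarrow> real^'d" where
  "fnrm F = (SOME n. norm n = 1 \<and> (\<forall>p\<in>F. \<forall>q\<in>F. n \<bullet> (p - q) = 0))"

text \<open>Surface integral over the flat face conv F: the integral of g composed with the
  orthogonal projection onto the face hyperplane over the unit-height prism
  conv F + [0,1] n equals (Fubini in orthonormal coordinates) the surface integral of g over conv F.\<close>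
definition face_int :: "(real^'d) set \<Rightarrow> (real^'d \<Rightarrow> real) \<Rightarrow> real" where
  "face_int F g =
     (let n = fnrm F; p0 = (SOME p. p \<in> F) in
      integral {y + t *\<^sub>R n | y t. y \<in> convex hull F \<and> t \<in> {0..1}}
               (\<lambda>x. g (x - ((x - p0) \<bullet> n) *\<^sub>R n)))"

definition polyk :: "nat \<Rightarrow> (real^'d \<Rightarrow> real) \<Rightarrow> bool" where
  "polyk k p \<longleftrightarrow> (\<exists>c :: ('d \<Rightarrow> nat) \<Rightarrow> real.
      p = (\<lambda>x. \<Sum>\<alpha>\<in>{\<alpha>. sum \<alpha> UNIV \<le> k}. c \<alpha> * (\<Prod>i\<in>UNIV. (x $ i) ^ \<alpha> i)))"

definition Vh :: "nat \<Rightarrow> (real^'d) set set \<Rightarrow> ((real^'d) set \<Rightarrow> real^'d \<Rightarrow> real) \<Rightarrow> bool" where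
  "Vh k T v \<longleftrightarrow> (\<forall>E\<in>T. polyk k (v E))"

definition Vhat :: "nat \<Rightarrow> (real^'d) set set \<Rightarrow> ((real^'d) set \<Rightarrow> real^'d \<Rightarrow> real) \<Rightarrow> bool" where
  "Vhat k T vh \<longleftrightarrow> (\<forall>F\<in>Fh T. (\<exists>p. polyk k p \<and> (\<forall>x\<in>convex hull F. vh F x = p x))
                        \<and> (F \<in> Fb T \<longrightarrow> (\<forall>x\<in>convex hull F. vh F x = 0)))"

definition grad :: "(real^'d \<Rightarrow> real) \<Rightarrow> real^'d \<Rightarrow> real^'d" where
  "grad g x = (\<chi> i. frechet_derivative g (at x) (axis i 1))"

definition centroid :: "(real^'d) set \<Rightarrow> real^'d" where
  "centroid E = (1 / real (card E)) *\<^sub>R (\<Sum>p\<in>E. p)"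

text \<open>kappa_E (kappa is assumed constant on the interior of each element).\<close>
definition kE :: "(real^'d \<Rightarrow> real^'d^'d) \<Rightarrow> (real^'d) set \<Rightarrow> real^'d^'d" where
  "kE kappa E = kappa (centroid E)"

definition hE :: "(real^'d) set \<Rightarrow> real" where
  "hE E = diameter (convex hull E)"

definition tauf :: "real \<Rightarrow> real \<Rightarrow> (real^'d \<Rightarrow> real^'d^'d) \<Rightarrow> (real^'d) set \<Rightarrow> (real^'d) set \<Rightarrow> real" where
  "tauf \<alpha>0 CT kappa E F = \<alpha>0 * CT^2 * (nrm E F \<bullet> (kE kappa E *v nrm E F)) / hE E"

definition kgrad :: "(real^'d \<Rightarrow> real^'d^'d) \<Rightarrow> ((real^'d) set \<Rightarrow> real^'d \<Rightarrow> real) \<Rightarrow> (real^'d) set \<Rightarrow> real^'d \<Rightarrow> real^'d" where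
  "kgrad kappa u E x = kE kappa E *v grad (u E) x"

definition jumpS :: "(real^'d) set set \<Rightarrow> (real^'d) set \<Rightarrow> ((real^'d) set \<Rightarrow> real^'d \<Rightarrow> real) \<Rightarrow> real^'d \<Rightarrow> real^'d" where
  "jumpS T F \<phi> x = (\<Sum>E\<in>elems T F. \<phi> E x *\<^sub>R nrm E F)"

definition jumpV :: "(real^'d) set set \<Rightarrow> (real^'d) set \<Rightarrow> ((real^'d) set \<Rightarrow> real^'d \<Rightarrow> real^'d) \<Rightarrow> real^'d \<Rightarrow> real" where
  "jumpV T F b x = (\<Sum>E\<in>elems T F. b E x \<bullet> nrm E F)"

text \<open>Weighted mean {phi}^*_{omega^tau}: on interior faces omega_2 phi_1 + omega_1 phi_2
  = sum_i (1 - omega_i) phi_i, omega_i = tau_i/(tau_1+tau_2); on boundary faces the trace.\<close>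
definition mean_star :: "(real^'d) set set \<Rightarrow> ((real^'d) set \<Rightarrow> (real^'d) set \<Rightarrow> real) \<Rightarrow> (real^'d) set
      \<Rightarrow> ((real^'d) set \<Rightarrow> real^'d \<Rightarrow> 'b::real_vector) \<Rightarrow> real^'d \<Rightarrow> 'b" where
  "mean_star T tau F \<phi> x =
     (if F \<in> Fb T then (\<Sum>E\<in>elems T F. \<phi> E x)
      else (\<Sum>E\<in>elems T F. (1 - tau E F / (\<Sum>E'\<in>elems T F. tau E' F)) *\<^sub>R \<phi> E x))"

definition rho0 :: "(real^'d) set set \<Rightarrow> ((real^'d) set \<Rightarrow> (real^'d) set \<Rightarrow> real) \<Rightarrow> (real^'d) set \<Rightarrow> real" where
  "rho0 T tau F =
     (if F \<in> Fb T then (\<Sum>E\<in>elems T F. tau E F)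
      else (\<Prod>E\<in>elems T F. tau E F) / (\<Sum>E\<in>elems T F. tau E F))"

definition rho1 :: "(real^'d) set set \<Rightarrow> ((real^'d) set \<Rightarrow> (real^'d) set \<Rightarrow> real) \<Rightarrow> (real^'d) set \<Rightarrow> real" where
  "rho1 T tau F = 1 / (\<Sum>E\<in>elems T F. tau E F)"

definition hjump :: "((real^'d) set \<Rightarrow> real^'d \<Rightarrow> real) \<Rightarrow> ((real^'d) set \<Rightarrow> real^'d \<Rightarrow> real)
      \<Rightarrow> (real^'d) set \<Rightarrow> (real^'d) set \<Rightarrow> real^'d \<Rightarrow> real^'d" where
  "hjump u uh E F x = (u E x - uh F x) *\<^sub>R nrm E F"

definition sighat :: "(real^'d \<Rightarrow> real^'d^'d) \<Rightarrow> ((real^'d) set \<Rightarrow> (real^'d) set \<Rightarrow> real)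
      \<Rightarrow> ((real^'d) set \<Rightarrow> real^'d \<Rightarrow> real) \<Rightarrow> ((real^'d) set \<Rightarrow> real^'d \<Rightarrow> real)
      \<Rightarrow> (real^'d) set \<Rightarrow> (real^'d) set \<Rightarrow> real^'d \<Rightarrow> real^'d" where
  "sighat kappa tau u uh E F x = - kgrad kappa u E x + tau E F *\<^sub>R hjump u uh E F x"

definition bdry_pair :: "(real^'d) set set \<Rightarrow> ((real^'d) set \<Rightarrow> (real^'d) set \<Rightarrow> real^'d \<Rightarrow> real) \<Rightarrow> real" where
  "bdry_pair T g = (\<Sum>E\<in>T. \<Sum>F\<in>faces E. face_int F (g E F))"

definition aH :: "(real^'d) set set \<Rightarrow> (real^'d \<Rightarrow> real^'d^'d) \<Rightarrow> ((real^'d) set \<Rightarrow> (real^'d) set \<Rightarrow> real)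
      \<Rightarrow> real \<Rightarrow> ((real^'d) set \<Rightarrow> real^'d \<Rightarrow> real) \<Rightarrow> ((real^'d) set \<Rightarrow> real^'d \<Rightarrow> real)
      \<Rightarrow> ((real^'d) set \<Rightarrow> real^'d \<Rightarrow> real) \<Rightarrow> ((real^'d) set \<Rightarrow> real^'d \<Rightarrow> real) \<Rightarrow> real" where
  "aH T kappa tau eps u uh v vh =
     (\<Sum>E\<in>T. integral (convex hull E) (\<lambda>x. kgrad kappa u E x \<bullet> grad (v E) x))
     + bdry_pair T (\<lambda>E F x. sighat kappa tau u uh E F x \<bullet> hjump v vh E F x)
     + eps * bdry_pair T (\<lambda>E F x. (- kgrad kappa v E x) \<bullet> hjump u uh E F x)"

end

(* Testing the scheme with v = 0 and a hybrid test function supported on one interior face F shows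
   that the numerical normal fluxes are conserved across F: the sum of sighat . n over the two elements
   sharing F is a polynomial of degree k on F with vanishing L2(F)-norm, hence it vanishes identically.
   This conservation law determines the hybrid trace, uh = {u}_omega - rho1 [kappa grad u] with
   omega_i = tau_i / (tau_1 + tau_2), and substituting it into the contribution of each face to the
   two pairings over the element boundaries gives both identities; on boundary faces uh = vh = 0 and
   they are immediate. Behind this lie two geometric facts: the two elements sharing an interior face
   have opposite outward normals (by conformity), and tau > 0 (kappa is coercive almost everywhere,
   hence on each element, where it is constant). *)

theory Submission
  imports Defs
begin

section \<open>Polynomials of bounded total degree\<close>

definition monomial :: "('d \<Rightarrow> nat) \<Rightarrow> real^'d \<Rightarrow> real" where
  "monomial \<alpha> x = (\<Prod>i\<in>UNIV. (x $ i) ^ \<alpha> i)"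

lemma finite_multidegrees: "finite {\<alpha>::'d::finite \<Rightarrow> nat. sum \<alpha> UNIV \<le> k}"
proof (rule finite_subset)
  show "{\<alpha>::'d \<Rightarrow> nat. sum \<alpha> UNIV \<le> k} \<subseteq> Pi\<^sub>E UNIV (\<lambda>_. {..k})"
  proof
    fix \<alpha> :: "'d \<Rightarrow> nat" assume "\<alpha> \<in> {\<alpha>. sum \<alpha> UNIV \<le> k}"
    then have "\<alpha> i \<le> k" for i using member_le_sum[of i UNIV \<alpha>] by simp
    then show "\<alpha> \<in> Pi\<^sub>E UNIV (\<lambda>_. {..k})" by (simp add: PiE_UNIV_domain)
  qed
qed (rule finite_PiE; simp)

lemma polyk_iff_monomials:
  "polyk k p \<longleftrightarrow> (\<exists>c. p = (\<lambda>x. \<Sum>\<alpha>\<in>{\<alpha>. sum \<alpha> UNIV \<le> k}. c \<alpha> * monomial \<alpha> x))"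
  unfolding polyk_def monomial_def ..

lemma polyk_0: "polyk k (\<lambda>x. 0)"
  unfolding polyk_iff_monomials by (rule exI[of _ "\<lambda>_. 0"]) simp

lemma polyk_add:
  assumes "polyk k p" "polyk k q" shows "polyk k (\<lambda>x. p x + q x)"
proof -
  obtain c d where "p = (\<lambda>x. \<Sum>\<alpha>\<in>{\<alpha>. sum \<alpha> UNIV \<le> k}. c \<alpha> * monomial \<alpha> x)"
    "q = (\<lambda>x. \<Sum>\<alpha>\<in>{\<alpha>. sum \<alpha> UNIV \<le> k}. d \<alpha> * monomial \<alpha> x)"
    using assms unfolding polyk_iff_monomials by blast
  then show ?thesis
    unfolding polyk_iff_monomials by (intro exI[of _ "\<lambda>\<alpha>. c \<alpha> + d \<alpha>"]) (simp add: sum.distrib algebra_simps)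
qed

lemma polyk_cmult:
  assumes "polyk k p" shows "polyk k (\<lambda>x. a * p x)"
proof -
  obtain c where "p = (\<lambda>x. \<Sum>\<alpha>\<in>{\<alpha>. sum \<alpha> UNIV \<le> k}. c \<alpha> * monomial \<alpha> x)"
    using assms unfolding polyk_iff_monomials by blast
  then show ?thesis
    unfolding polyk_iff_monomials by (intro exI[of _ "\<lambda>\<alpha>. a * c \<alpha>"]) (simp add: sum_distrib_left algebra_simps)
qed

lemma polyk_diff: "polyk k p \<Longrightarrow> polyk k q \<Longrightarrow> polyk k (\<lambda>x. p x - q x)"
  using polyk_add[of k p "\<lambda>x. -1 * q x"] polyk_cmult[of k q "-1"] by simp

lemma polyk_sum: "finite A \<Longrightarrow> (\<And>a. a \<in> A \<Longrightarrow> polyk k (p a)) \<Longrightarrow> polyk k (\<lambda>x. \<Sum>a\<in>A. p a x)"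
  by (induction A rule: finite_induct) (auto intro: polyk_0 polyk_add)

lemma polyk_monomial:
  assumes "sum \<beta> UNIV \<le> k" shows "polyk k (\<lambda>x. c * monomial \<beta> x)"
  unfolding polyk_iff_monomials
proof (intro exI ext)
  fix x
  have "(\<Sum>\<alpha>\<in>{\<alpha>. sum \<alpha> UNIV \<le> k}. (if \<alpha> = \<beta> then c else 0) * monomial \<alpha> x)
      = (\<Sum>\<alpha>\<in>{\<alpha>. sum \<alpha> UNIV \<le> k}. if \<alpha> = \<beta> then c * monomial \<alpha> x else 0)"
    by (rule sum.cong) auto
  then show "c * monomial \<beta> x = (\<Sum>\<alpha>\<in>{\<alpha>. sum \<alpha> UNIV \<le> k}. (if \<alpha> = \<beta> then c else 0) * monomial \<alpha> x)"
    using assms by (simp add: sum.delta[OF finite_multidegrees])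
qed

lemma continuous_on_polyk: "polyk k p \<Longrightarrow> continuous_on S p"
  unfolding polyk_def by (auto intro!: continuous_intros)

lemma has_derivative_monomial:
  "(monomial \<alpha> has_derivative
     (\<lambda>h. \<Sum>i\<in>UNIV. (of_nat (\<alpha> i) * x $ i ^ (\<alpha> i - 1) * h $ i) * (\<Prod>j\<in>UNIV - {i}. x $ j ^ \<alpha> j))) (at x)"
  unfolding monomial_def
  by (rule has_derivative_prod)
    (auto intro!: derivative_eq_intros bounded_linear_imp_has_derivative bounded_linear_vec_nth)

lemma grad_monomial: "grad (monomial \<alpha>) x $ j = of_nat (\<alpha> j) * monomial (\<alpha>(j := \<alpha> j - 1)) x"
  \<comment> \<open>the subtraction is truncated; for \<alpha> j = 0 the factor of_nat (\<alpha> j) vanishes anyway\<close>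
proof -
  have "grad (monomial \<alpha>) x $ j = of_nat (\<alpha> j) * x $ j ^ (\<alpha> j - 1) * (\<Prod>i\<in>UNIV - {j}. x $ i ^ \<alpha> i)"
    unfolding grad_def vec_lambda_beta frechet_derivative_at[OF has_derivative_monomial, symmetric]
    by (subst sum.remove[of UNIV j]) (auto simp: axis_def)
  also have "(\<Prod>i\<in>UNIV - {j}. x $ i ^ \<alpha> i) = (\<Prod>i\<in>UNIV - {j}. x $ i ^ (\<alpha>(j := \<alpha> j - 1)) i)"
    by (rule prod.cong) auto
  also have "of_nat (\<alpha> j) * x $ j ^ (\<alpha> j - 1) * \<dots> = of_nat (\<alpha> j) * monomial (\<alpha>(j := \<alpha> j - 1)) x"
    unfolding monomial_def by (simp add: prod.remove[of UNIV j])
  finally show ?thesis .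
qed

lemma polyk_grad_component:
  assumes "polyk k p" shows "polyk k (\<lambda>x. grad p x $ j)"
proof -
  let ?A = "{\<alpha>. sum \<alpha> UNIV \<le> k}"
  obtain c where p: "p = (\<lambda>x. \<Sum>\<alpha>\<in>?A. c \<alpha> * monomial \<alpha> x)"
    using assms unfolding polyk_iff_monomials by blast
  have "(monomial \<alpha> has_derivative frechet_derivative (monomial \<alpha>) (at x)) (at x)" for \<alpha> x
    using has_derivative_monomial by (meson differentiableI frechet_derivative_works)
  then have D: "(p has_derivative (\<lambda>h. \<Sum>\<alpha>\<in>?A. c \<alpha> * frechet_derivative (monomial \<alpha>) (at x) h)) (at x)" for x
    unfolding p by (intro has_derivative_sum has_derivative_mult_right)
  have "grad p x $ j = (\<Sum>\<alpha>\<in>?A. c \<alpha> * grad (monomial \<alpha>) x $ j)" for x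
    unfolding grad_def frechet_derivative_at[OF D[of x], symmetric] by simp
  moreover have "sum (\<alpha>(j := \<alpha> j - 1)) UNIV \<le> k" if "\<alpha> \<in> ?A" for \<alpha>
  proof -
    have "sum (\<alpha>(j := \<alpha> j - 1)) UNIV \<le> sum \<alpha> UNIV" by (rule sum_mono) auto
    with that show ?thesis by simp
  qed
  ultimately show ?thesis
    unfolding grad_monomial mult.assoc[symmetric]
    by (auto intro!: polyk_sum[OF finite_multidegrees] polyk_monomial)
qed

section \<open>Simplices, facets and outward normals\<close>

definition full_simplex :: "(real^'d) set \<Rightarrow> bool" where
  "full_simplex E \<longleftrightarrow> card E = CARD('d) + 1 \<and> \<not> affine_dependent E"

definition facet_vertices :: "(real^'d) set \<Rightarrow> bool" where
  "facet_vertices F \<longleftrightarrow> card F = CARD('d) \<and> \<not> affine_dependent F"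

lemma full_simplex_finite: "full_simplex E \<Longrightarrow> finite E"
  unfolding full_simplex_def using card.infinite by fastforce

lemma facet_vertices_finite: "facet_vertices F \<Longrightarrow> finite F"
  unfolding facet_vertices_def using card.infinite by fastforce

lemma facet_vertices_nonempty: "facet_vertices F \<Longrightarrow> F \<noteq> {}"
  unfolding facet_vertices_def by auto

lemma finite_faces: "finite E \<Longrightarrow> finite (faces E)"
  unfolding faces_def by (simp add: setcompr_eq_image)

lemma facet_vertices_face:
  assumes "full_simplex E" "F \<in> faces E" shows "facet_vertices F"
proof -
  obtain q where "q \<in> E" "F = E - {q}" using assms(2) unfolding faces_def by blast
  then show ?thesis
    using assms(1) full_simplex_finite[OF assms(1)] affine_independent_subset[of E F]
    unfolding full_simplex_def facet_vertices_def by auto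
qed

lemma fnrm_unit_normal:
  fixes F :: "(real^'d) set"
  assumes "finite F" "card F \<le> CARD('d)"
  shows "norm (fnrm F) = 1 \<and> (\<forall>p\<in>F. \<forall>q\<in>F. fnrm F \<bullet> (p - q) = 0)"
proof -
  have "interior (affine hull F) = {}"
    using empty_interior_affine_hull[of F] assms by simp
  then obtain a b where "a \<noteq> 0" "affine hull F \<subseteq> {x. a \<bullet> x = b}"
    by (rule empty_interior_subset_hyperplane[OF convex_affine_hull])
  then have "norm (a /\<^sub>R norm a) = 1 \<and> (\<forall>p\<in>F. \<forall>q\<in>F. (a /\<^sub>R norm a) \<bullet> (p - q) = 0)"
    using hull_subset[of F affine] by (auto simp: inner_diff_right subset_iff)
  then show ?thesis
    unfolding fnrm_def by (rule someI)
qed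

lemma affine_hull_facet_vertices:
  assumes "facet_vertices F" "p0 \<in> F" "n \<noteq> 0" "\<forall>p\<in>F. \<forall>q\<in>F. n \<bullet> (p - q) = 0"
  shows "affine hull F = {x. n \<bullet> (x - p0) = 0}"
proof -
  have H: "{x. n \<bullet> (x - p0) = 0} = {x. n \<bullet> x = n \<bullet> p0}"
    by (auto simp: inner_diff_right)
  have "affine hull F \<subseteq> {x. n \<bullet> x = n \<bullet> p0}"
  proof (rule hull_minimal)
    show "F \<subseteq> {x. n \<bullet> x = n \<bullet> p0}"
      using assms(2,4) by (fastforce simp: inner_diff_right)
  qed (rule affine_hyperplane)
  moreover have "aff_dim (affine hull F) = aff_dim {x. n \<bullet> x = n \<bullet> p0}"
    using aff_dim_affine_independent[of F] aff_dim_hyperplane[OF assms(3)] assms(1)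
    unfolding facet_vertices_def by simp
  moreover have "affine hull F \<noteq> {}"
    using hull_inc[OF assms(2)] by blast
  ultimately have "affine hull F = {x. n \<bullet> x = n \<bullet> p0}"
    by (intro affine_dim_equal[OF affine_affine_hull affine_hyperplane])
  then show ?thesis
    using H by simp
qed

lemma unit_normals_facet_vertices:
  assumes F: "facet_vertices F"
    and n0: "norm n0 = 1" "\<forall>p\<in>F. \<forall>q\<in>F. n0 \<bullet> (p - q) = 0"
    and n: "norm n = 1" "\<forall>p\<in>F. \<forall>q\<in>F. n \<bullet> (p - q) = 0"
  shows "n = n0 \<or> n = - n0"
proof -
  obtain p0 where p0: "p0 \<in> F" using facet_vertices_nonempty[OF F] by blast
  define w where "w = n - (n \<bullet> n0) *\<^sub>R n0"
  have "n0 \<noteq> 0" "n \<noteq> 0"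
    using n0(1) n(1) by auto
  have "n0 \<bullet> w = 0"
    using n0(1) unfolding w_def by (simp add: inner_diff_right inner_commute norm_eq_1)
  then have "p0 + w \<in> affine hull F"
    unfolding affine_hull_facet_vertices[OF F p0 \<open>n0 \<noteq> 0\<close> n0(2)] by simp
  then have "n \<bullet> w = 0"
    unfolding affine_hull_facet_vertices[OF F p0 \<open>n \<noteq> 0\<close> n(2)] by simp
  with \<open>n0 \<bullet> w = 0\<close> have "w \<bullet> w = 0"
    unfolding w_def by (simp add: inner_diff_left)
  then have "n = (n \<bullet> n0) *\<^sub>R n0"
    unfolding w_def by simp
  moreover from this have "\<bar>n \<bullet> n0\<bar> = 1"
    using n(1) n0(1) by (metis mult.right_neutral norm_scaleR real_norm_def)
  ultimately show ?thesis
    by (cases "n \<bullet> n0 \<ge> 0") auto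
qed

lemma outward_normal_exists:
  assumes E: "full_simplex E" and q: "q \<in> E" and F: "F = E - {q}"
  obtains n where "norm n = 1" "\<forall>p\<in>F. \<forall>p'\<in>F. n \<bullet> (p - p') = 0" "\<forall>p\<in>F. n \<bullet> (q - p) < 0"
proof -
  have FV: "facet_vertices F"
    using facet_vertices_face[OF E] q F unfolding faces_def by blast
  obtain p0 where p0: "p0 \<in> F"
    using facet_vertices_nonempty[OF FV] by blast
  have n0: "norm (fnrm F) = 1" "\<forall>p\<in>F. \<forall>p'\<in>F. fnrm F \<bullet> (p - p') = 0"
    using fnrm_unit_normal[of F] FV facet_vertices_finite[OF FV] unfolding facet_vertices_def by auto
  then have "fnrm F \<noteq> 0"
    by auto
  have side: "fnrm F \<bullet> (q - p) = fnrm F \<bullet> (q - p0)" if "p \<in> F" for p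
  proof -
    have "fnrm F \<bullet> (p - p0) = 0"
      using n0(2) that p0 by blast
    then show ?thesis
      by (simp add: inner_diff_right)
  qed
  have "fnrm F \<bullet> (q - p0) \<noteq> 0"
  proof
    assume "fnrm F \<bullet> (q - p0) = 0"
    then have "q \<in> affine hull (E - {q})"
      unfolding F[symmetric] affine_hull_facet_vertices[OF FV p0 \<open>fnrm F \<noteq> 0\<close> n0(2)] by simp
    then show False
      using E q unfolding full_simplex_def affine_dependent_def by blast
  qed
  define n where "n = (if fnrm F \<bullet> (q - p0) < 0 then fnrm F else - fnrm F)"
  show ?thesis
  proof (rule that[of n])
    show "norm n = 1" "\<forall>p\<in>F. \<forall>p'\<in>F. n \<bullet> (p - p') = 0"
      using n0 unfolding n_def by simp_all
    show "\<forall>p\<in>F. n \<bullet> (q - p) < 0"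
      using side \<open>fnrm F \<bullet> (q - p0) \<noteq> 0\<close> unfolding n_def by auto
  qed
qed

lemma nrm_face:
  assumes E: "full_simplex E" and q: "q \<in> E" and F: "F = E - {q}"
  shows "norm (nrm E F) = 1" and "\<forall>p\<in>F. nrm E F \<bullet> (q - p) < 0"
    and "\<forall>p\<in>F. \<forall>p'\<in>F. nrm E F \<bullet> (p - p') = 0"
    and "\<And>p. p \<in> F \<Longrightarrow> affine hull F = {x. nrm E F \<bullet> (x - p) = 0}"
proof -
  have FV: "facet_vertices F"
    using facet_vertices_face[OF E] q F unfolding faces_def by blast
  obtain p0 where p0: "p0 \<in> F"
    using facet_vertices_nonempty[OF FV] by blast
  obtain n where n: "norm n = 1" "\<forall>p\<in>F. \<forall>p'\<in>F. n \<bullet> (p - p') = 0" "\<forall>p\<in>F. n \<bullet> (q - p) < 0"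
    using outward_normal_exists[OF E q F] by blast
  have "E - F = {q}"
    using q F by auto
  have "nrm E F = n"
    unfolding nrm_def
  proof (rule the_equality)
    show "norm n = 1 \<and> (\<forall>p\<in>F. \<forall>p'\<in>F. n \<bullet> (p - p') = 0) \<and> (\<forall>p\<in>F. \<forall>q\<in>E - F. n \<bullet> (q - p) < 0)"
      using n \<open>E - F = {q}\<close> by simp
    fix m
    assume m: "norm m = 1 \<and> (\<forall>p\<in>F. \<forall>p'\<in>F. m \<bullet> (p - p') = 0) \<and> (\<forall>p\<in>F. \<forall>q\<in>E - F. m \<bullet> (q - p) < 0)"
    then have "m = n \<or> m = - n"
      using unit_normals_facet_vertices[OF FV n(1,2)] by blast
    moreover have "m \<bullet> (q - p0) < 0" "n \<bullet> (q - p0) < 0"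
      using m n(3) p0 \<open>E - F = {q}\<close> by auto
    ultimately show "m = n"
      by auto
  qed
  with n show "norm (nrm E F) = 1" "\<forall>p\<in>F. nrm E F \<bullet> (q - p) < 0"
    "\<forall>p\<in>F. \<forall>p'\<in>F. nrm E F \<bullet> (p - p') = 0"
    by simp_all
  then show "\<And>p. p \<in> F \<Longrightarrow> affine hull F = {x. nrm E F \<bullet> (x - p) = 0}"
    by (intro affine_hull_facet_vertices[OF FV]) auto
qed

lemma normal_shift_convex_combination:
  fixes y q n :: "'a::real_inner"
  assumes n: "n \<bullet> n = 1" and a: "0 < n \<bullet> (y - q)" and \<delta>: "0 \<le> \<delta>" "2 * \<delta> \<le> n \<bullet> (y - q)"
  obtains t y' where "0 \<le> t" "t \<le> 1/2" "y - \<delta> *\<^sub>R n = (1 - t) *\<^sub>R y' + t *\<^sub>R q"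
    "n \<bullet> (y' - y) = 0" "norm (y' - y) \<le> 2 * \<delta> * (norm (y - q) / (n \<bullet> (y - q)) + 1)"
proof -
  \<comment> \<open>y' is where the line from q through y - \<delta> n meets the hyperplane through y orthogonal to n\<close>
  let ?a = "n \<bullet> (y - q)"
  define t where "t = \<delta> / ?a"
  have t: "0 \<le> t" "t \<le> 1/2" "t * ?a = \<delta>"
    using \<delta> a unfolding t_def by (auto simp: field_simps)
  define y' where "y' = y + (1 / (1 - t)) *\<^sub>R (t *\<^sub>R (y - q) - \<delta> *\<^sub>R n)"
  show ?thesis
  proof (rule that[OF t(1,2)])
    have "(1 - t) *\<^sub>R y' = (1 - t) *\<^sub>R y + (t *\<^sub>R (y - q) - \<delta> *\<^sub>R n)"
      using t unfolding y'_def by (simp add: scaleR_add_right)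
    then show "y - \<delta> *\<^sub>R n = (1 - t) *\<^sub>R y' + t *\<^sub>R q"
      by (simp add: algebra_simps)
    show "n \<bullet> (y' - y) = 0"
      using n t unfolding y'_def by (simp add: inner_diff_right)
    have "norm (y' - y) = (1 / (1 - t)) * norm (t *\<^sub>R (y - q) - \<delta> *\<^sub>R n)"
      using t unfolding y'_def by simp
    also have "\<dots> \<le> 2 * (t * norm (y - q) + \<delta>)"
    proof (rule mult_mono)
      have "norm n = 1"
        using n by (simp add: norm_eq_1)
      then show "norm (t *\<^sub>R (y - q) - \<delta> *\<^sub>R n) \<le> t * norm (y - q) + \<delta>"
        using t \<delta> norm_triangle_ineq4[of "t *\<^sub>R (y - q)" "\<delta> *\<^sub>R n"] by simp
      show "1 / (1 - t) \<le> 2"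
        using t by (simp add: field_simps)
    qed (use t \<delta> in auto)
    also have "\<dots> = 2 * \<delta> * (norm (y - q) / ?a + 1)"
      using a unfolding t_def by (simp add: field_simps)
    finally show "norm (y' - y) \<le> 2 * \<delta> * (norm (y - q) / ?a + 1)" .
  qed
qed

lemma inward_normal_segment_in_simplex:
  assumes E: "full_simplex E" and q: "q \<in> E" and F: "F = E - {q}"
    and y: "y \<in> rel_interior (convex hull F)"
  obtains e where "e > 0" "\<And>\<delta>. 0 \<le> \<delta> \<Longrightarrow> \<delta> \<le> e \<Longrightarrow> y - \<delta> *\<^sub>R nrm E F \<in> convex hull E"
proof -
  let ?n = "nrm E F"
  let ?a = "?n \<bullet> (y - q)"
  let ?c = "norm (y - q) / ?a + 1"
  note N = nrm_face[OF E q F]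
  have nn: "?n \<bullet> ?n = 1"
    using N(1) by (simp add: norm_eq_1)
  obtain p0 where p0: "p0 \<in> F"
    using y rel_interior_empty by fastforce
  obtain r where r: "r > 0" "ball y r \<inter> affine hull F \<subseteq> convex hull F"
    using y unfolding mem_rel_interior_ball affine_hull_convex_hull by blast
  have "y \<in> affine hull F"
    using y rel_interior_subset convex_hull_subset_affine_hull by blast
  then have yH: "?n \<bullet> (y - p0) = 0"
    unfolding N(4)[OF p0] by simp
  moreover have "?n \<bullet> (q - p0) < 0"
    using N(2) p0 by blast
  ultimately have a: "0 < ?a"
    by (simp add: inner_diff_right)
  then have c: "0 < ?c"
    by (simp add: add_nonneg_pos)
  obtain e where e: "0 < e" "e < ?a / 2" "e < r / (2 * ?c)"
    using field_lbound_gt_zero[of "?a / 2" "r / (2 * ?c)"] a r c by auto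
  show ?thesis
  proof (rule that[OF \<open>e > 0\<close>])
    fix \<delta> :: real assume \<delta>: "0 \<le> \<delta>" "\<delta> \<le> e"
    then have "2 * \<delta> \<le> ?a"
      using e by simp
    then obtain t y' where t: "0 \<le> t" "t \<le> 1/2" and z: "y - \<delta> *\<^sub>R ?n = (1 - t) *\<^sub>R y' + t *\<^sub>R q"
      and y': "?n \<bullet> (y' - y) = 0" "norm (y' - y) \<le> 2 * \<delta> * ?c"
      using normal_shift_convex_combination[OF nn a \<delta>(1)] by blast
    have "?n \<bullet> (y' - p0) = 0"
      using y' yH by (simp add: inner_diff_right)
    moreover have "norm (y' - y) < r"
    proof -
      have "\<delta> * (2 * ?c) < r"
        using \<delta> e(3) c by (simp add: pos_less_divide_eq[symmetric])
      then have "2 * \<delta> * ?c < r"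
        by (simp add: ac_simps)
      then show ?thesis
        using order_le_less_trans[OF y'(2)] by blast
    qed
    ultimately have "y' \<in> convex hull F"
      using r(2) unfolding N(4)[OF p0] by (auto simp: dist_norm norm_minus_commute)
    then have "y' \<in> convex hull E"
      using hull_mono[of F E] F by blast
    then show "y - \<delta> *\<^sub>R ?n \<in> convex hull E"
      unfolding z using t hull_inc[OF q]
      by (intro convexD[OF convex_convex_hull]) auto
  qed
qed

lemma opposite_normals:
  assumes E1: "full_simplex E1" and E2: "full_simplex E2"
    and conforming: "convex hull E1 \<inter> convex hull E2 = convex hull (E1 \<inter> E2)"
    and "E1 \<noteq> E2" "F \<in> faces E1" "F \<in> faces E2"
  shows "nrm E2 F = - nrm E1 F"
  \<comment> \<open>if the outward normals agreed, a point slightly inside along the common inward normal would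
    lie in both simplices, hence in their common face\<close>
proof (rule ccontr)
  obtain q1 q2 where q1: "q1 \<in> E1" "F = E1 - {q1}" and q2: "q2 \<in> E2" "F = E2 - {q2}"
    using assms(5,6) unfolding faces_def by blast
  have FV: "facet_vertices F"
    using facet_vertices_face[OF E1 assms(5)] .
  have "E1 \<inter> E2 = F"
    using q1 q2 \<open>E1 \<noteq> E2\<close> by blast
  let ?n = "nrm E1 F"
  assume "nrm E2 F \<noteq> - ?n"
  then have same: "nrm E2 F = ?n"
    using unit_normals_facet_vertices[OF FV nrm_face(1,3)[OF E1 q1] nrm_face(1,3)[OF E2 q2]] by blast
  obtain y where y: "y \<in> rel_interior (convex hull F)"
    using facet_vertices_nonempty[OF FV] rel_interior_eq_empty[of "convex hull F"] by auto
  obtain e1 where e1: "e1 > 0" "\<And>\<delta>. 0 \<le> \<delta> \<Longrightarrow> \<delta> \<le> e1 \<Longrightarrow> y - \<delta> *\<^sub>R ?n \<in> convex hull E1"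
    using inward_normal_segment_in_simplex[OF E1 q1 y] by blast
  obtain e2 where e2: "e2 > 0" "\<And>\<delta>. 0 \<le> \<delta> \<Longrightarrow> \<delta> \<le> e2 \<Longrightarrow> y - \<delta> *\<^sub>R ?n \<in> convex hull E2"
    using inward_normal_segment_in_simplex[OF E2 q2 y] unfolding same by blast
  define z where "z = y - min e1 e2 *\<^sub>R ?n"
  have "z \<in> convex hull F"
    using e1 e2 conforming \<open>E1 \<inter> E2 = F\<close> unfolding z_def by auto
  moreover have "y \<in> convex hull F"
    using y rel_interior_subset by blast
  moreover obtain p0 where "p0 \<in> F"
    using facet_vertices_nonempty[OF FV] by blast
  ultimately have "?n \<bullet> (z - p0) = 0" "?n \<bullet> (y - p0) = 0"
    using nrm_face(4)[OF E1 q1] convex_hull_subset_affine_hull[of F] by blast+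
  then have "min e1 e2 * (?n \<bullet> ?n) = 0"
    unfolding z_def by (simp add: inner_diff_right)
  moreover have "?n \<bullet> ?n = 1"
    using nrm_face(1)[OF E1 q1] by (simp add: norm_eq_1)
  ultimately show False
    using e1(1) e2(1) by simp
qed

section \<open>Integrals over faces\<close>

definition face_prism :: "(real^'d) set \<Rightarrow> (real^'d) set" where
  "face_prism F = {y + t *\<^sub>R fnrm F | y t. y \<in> convex hull F \<and> t \<in> {0..1}}"

definition face_proj :: "(real^'d) set \<Rightarrow> real^'d \<Rightarrow> real^'d" where
  "face_proj F x = x - ((x - (SOME p. p \<in> F)) \<bullet> fnrm F) *\<^sub>R fnrm F"

lemma face_int_prism: "face_int F g = integral (face_prism F) (\<lambda>x. g (face_proj F x))"
  unfolding face_int_def face_prism_def face_proj_def Let_def by simp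

lemma fnrm_facet_vertices:
  fixes F :: "(real^'d) set"
  assumes "facet_vertices F"
  shows "norm (fnrm F) = 1" "\<And>p. p \<in> F \<Longrightarrow> affine hull F = {x. fnrm F \<bullet> (x - p) = 0}"
proof -
  have n: "norm (fnrm F) = 1 \<and> (\<forall>p\<in>F. \<forall>q\<in>F. fnrm F \<bullet> (p - q) = 0)"
    using fnrm_unit_normal[of F] facet_vertices_finite[OF assms] assms
    unfolding facet_vertices_def by simp
  then show "norm (fnrm F) = 1" by simp
  have "fnrm F \<noteq> 0" using n by auto
  then show "\<And>p. p \<in> F \<Longrightarrow> affine hull F = {x. fnrm F \<bullet> (x - p) = 0}"
    using affine_hull_facet_vertices[OF assms] n by blast
qed

lemma fnrm_orthogonal_hull:
  assumes "facet_vertices F" "y \<in> convex hull F"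
  shows "fnrm F \<bullet> (y - (SOME p. p \<in> F)) = 0"
proof -
  have "(SOME p. p \<in> F) \<in> F"
    using facet_vertices_nonempty[OF assms(1)] by (simp add: some_in_eq)
  then show ?thesis
    using assms(2) convex_hull_subset_affine_hull[of F] fnrm_facet_vertices(2)[OF assms(1)] by blast
qed

lemma face_proj_prism:
  assumes "facet_vertices F" "y \<in> convex hull F"
  shows "face_proj F (y + t *\<^sub>R fnrm F) = y"
proof -
  let ?n = "fnrm F" and ?p = "SOME p. p \<in> F"
  have "(y + t *\<^sub>R ?n - ?p) \<bullet> ?n = ?n \<bullet> (y - ?p) + t * (?n \<bullet> ?n)"
    by (simp add: algebra_simps inner_add_left inner_diff_left inner_commute)
  also have "\<dots> = t"
    using fnrm_orthogonal_hull[OF assms] fnrm_facet_vertices(1)[OF assms(1)] by (simp add: norm_eq_1)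
  finally show ?thesis
    unfolding face_proj_def by simp
qed

lemma face_proj_in_hull:
  assumes "facet_vertices F" "x \<in> face_prism F"
  shows "face_proj F x \<in> convex hull F"
proof -
  obtain y t where "x = y + t *\<^sub>R fnrm F" "y \<in> convex hull F"
    using assms(2) unfolding face_prism_def by blast
  then show ?thesis
    using face_proj_prism[OF assms(1)] by simp
qed

lemma continuous_on_face_proj: "continuous_on S (face_proj F)"
  unfolding face_proj_def by (intro continuous_intros)

lemma compact_face_prism:
  assumes "facet_vertices F" shows "compact (face_prism F)"
proof -
  let ?f = "\<lambda>z. fst z + snd z *\<^sub>R fnrm F"
  have eq: "face_prism F = ?f ` ((convex hull F) \<times> {0..1})"
  proof (intro set_eqI iffI)
    fix x assume "x \<in> face_prism F"
    then obtain y t where "x = y + t *\<^sub>R fnrm F" "y \<in> convex hull F" "t \<in> {0..1}"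
      unfolding face_prism_def by blast
    then show "x \<in> ?f ` ((convex hull F) \<times> {0..1})"
      by (intro image_eqI[of _ _ "(y, t)"]) simp_all
  next
    fix x assume "x \<in> ?f ` ((convex hull F) \<times> {0..1})"
    then show "x \<in> face_prism F"
      unfolding face_prism_def by force
  qed
  have cmp: "compact ((convex hull F) \<times> {0..1::real})"
    using facet_vertices_finite[OF assms]
    by (intro compact_Times compact_convex_hull finite_imp_compact compact_Icc)
  have cont: "continuous_on ((convex hull F) \<times> {0..1}) ?f"
    by (intro continuous_intros)
  show ?thesis
    unfolding eq by (rule compact_continuous_image[OF cont cmp])
qed

lemma integrable_continuous_compact:
  fixes f :: "'a::euclidean_space \<Rightarrow> real"
  assumes "compact S" "continuous_on S f"
  shows "f integrable_on S"
  using borel_integrable_compact[OF assms] set_borel_integral_eq_integral(1)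
  unfolding set_integrable_def by blast

lemma integrable_face_prism:
  fixes g :: "real^'d \<Rightarrow> real"
  assumes "facet_vertices F" "continuous_on (convex hull F) g"
  shows "(\<lambda>x. g (face_proj F x)) integrable_on face_prism F"
proof (rule integrable_continuous_compact[OF compact_face_prism[OF assms(1)]])
  show "continuous_on (face_prism F) (\<lambda>x. g (face_proj F x))"
    using face_proj_in_hull[OF assms(1)]
    by (intro continuous_on_compose2[OF assms(2) continuous_on_face_proj]) blast
qed

lemma face_int_add:
  fixes g h :: "real^'d \<Rightarrow> real"
  assumes "facet_vertices F" "continuous_on (convex hull F) g" "continuous_on (convex hull F) h"
  shows "face_int F (\<lambda>x. g x + h x) = face_int F g + face_int F h"
  unfolding face_int_prism
  by (rule integral_add[OF integrable_face_prism[OF assms(1,2)] integrable_face_prism[OF assms(1,3)]])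

lemma face_int_uminus: "face_int F (\<lambda>x. - g x) = - face_int F g"
  unfolding face_int_prism by simp

lemma face_int_0: "face_int F (\<lambda>x. 0) = 0"
  unfolding face_int_prism by simp

lemma face_int_sum:
  fixes g :: "'a \<Rightarrow> real^'d \<Rightarrow> real"
  assumes "facet_vertices F" "finite A" "\<And>a. a \<in> A \<Longrightarrow> continuous_on (convex hull F) (g a)"
  shows "face_int F (\<lambda>x. \<Sum>a\<in>A. g a x) = (\<Sum>a\<in>A. face_int F (g a))"
  unfolding face_int_prism
  using Henstock_Kurzweil_Integration.integral_sum[OF assms(2) integrable_face_prism[OF assms(1,3)]] .

lemma face_int_cong:
  assumes "facet_vertices F" "\<And>y. y \<in> convex hull F \<Longrightarrow> g y = h y"
  shows "face_int F g = face_int F h"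
  unfolding face_int_prism using face_proj_in_hull[OF assms(1)] assms(2)
  by (intro integral_cong) blast

lemma norm_minus_projection_le:
  fixes n v :: "'a::real_inner"
  assumes "norm n = 1"
  shows "norm (v - (v \<bullet> n) *\<^sub>R n) \<le> norm v"
proof (rule power2_le_imp_le)
  have "n \<bullet> n = 1"
    using assms by (simp add: norm_eq_1)
  then have "(v - (v \<bullet> n) *\<^sub>R n) \<bullet> (v - (v \<bullet> n) *\<^sub>R n) = v \<bullet> v - (v \<bullet> n) * (v \<bullet> n)"
    by (simp add: inner_diff_left inner_diff_right inner_commute algebra_simps)
  then show "(norm (v - (v \<bullet> n) *\<^sub>R n))\<^sup>2 \<le> (norm v)\<^sup>2"
    by (simp add: power2_norm_eq_inner)
qed simp

lemma ball_in_face_prism: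
  assumes F: "facet_vertices F" and y: "y \<in> rel_interior (convex hull F)"
  obtains r where "r > 0" "ball (y + (1/2) *\<^sub>R fnrm F) r \<subseteq> face_prism F"
proof -
  let ?n = "fnrm F" and ?p = "SOME p. p \<in> F"
  have nn: "?n \<bullet> ?n = 1"
    using fnrm_facet_vertices(1)[OF F] by (simp add: norm_eq_1)
  have p: "?p \<in> F"
    using facet_vertices_nonempty[OF F] by (simp add: some_in_eq)
  obtain r where r: "r > 0" "ball y r \<inter> affine hull F \<subseteq> convex hull F"
    using y unfolding mem_rel_interior_ball affine_hull_convex_hull by blast
  have yH: "?n \<bullet> (y - ?p) = 0"
    using fnrm_orthogonal_hull[OF F] y rel_interior_subset by blast
  define z0 where "z0 = y + (1/2) *\<^sub>R ?n"
  have "z \<in> face_prism F" if z: "z \<in> ball z0 (min r (1/2))" for z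
  proof -
    define t where "t = (z - ?p) \<bullet> ?n"
    define w where "w = z - t *\<^sub>R ?n"
    have t: "t = (z - z0) \<bullet> ?n + 1/2"
      using yH nn unfolding t_def z0_def by (simp add: algebra_simps inner_diff_left inner_commute)
    have "norm (w - y) \<le> norm (z - z0)"
      using norm_minus_projection_le[OF fnrm_facet_vertices(1)[OF F], of "z - z0"]
      unfolding w_def t z0_def by (simp add: algebra_simps)
    moreover have "?n \<bullet> (w - ?p) = 0"
      using nn unfolding w_def t_def by (simp add: inner_diff_right inner_commute)
    ultimately have "w \<in> convex hull F"
      using r(2) z fnrm_facet_vertices(2)[OF F p] by (auto simp: dist_norm norm_minus_commute)
    moreover have "\<bar>(z - z0) \<bullet> ?n\<bar> \<le> norm (z - z0)"
      using Cauchy_Schwarz_ineq2[of "z - z0" ?n] fnrm_facet_vertices(1)[OF F] by simp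
    then have "t \<in> {0..1}"
      using z unfolding t by (auto simp: dist_norm norm_minus_commute)
    ultimately show ?thesis
      unfolding face_prism_def w_def by force
  qed
  then show ?thesis
    using that[of "min r (1/2)"] r(1) unfolding z0_def by (simp add: subset_iff)
qed

lemma face_int_square_eq_0D:
  assumes F: "facet_vertices F" and g: "continuous_on (convex hull F) g"
    and int0: "face_int F (\<lambda>x. g x * g x) = 0" and y: "y \<in> convex hull F"
  shows "g y = 0"
proof -
  let ?h = "\<lambda>x. g (face_proj F x) * g (face_proj F x)"
  have h: "continuous_on (face_prism F) ?h"
    using face_proj_in_hull[OF F]
    by (intro continuous_on_mult continuous_on_compose2[OF g continuous_on_face_proj]) blast+
  have "g y = 0" if y: "y \<in> rel_interior (convex hull F)" for y
  proof -
    define z0 where "z0 = y + (1/2) *\<^sub>R fnrm F"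
    obtain r where r: "r > 0" "ball z0 r \<subseteq> face_prism F"
      using ball_in_face_prism[OF F y] unfolding z0_def by blast
    obtain a b where ab: "cbox a b \<subseteq> ball z0 r" "z0 \<in> box a b"
      using r(1) by (meson centre_in_ball open_contains_cbox open_ball)
    have sub: "cbox a b \<subseteq> face_prism F"
      using ab(1) r(2) by blast
    have hab: "continuous_on (cbox a b) ?h"
      using continuous_on_subset[OF h sub] .
    have "integral (cbox a b) ?h \<le> integral (face_prism F) ?h"
      using sub integrable_continuous[OF hab] integrable_continuous_compact[OF compact_face_prism[OF F] h]
      by (rule integral_subset_le) simp
    also have "\<dots> = 0"
      using int0 unfolding face_int_prism .
    finally have "integral (cbox a b) ?h = 0"
      using integral_nonneg[OF integrable_continuous[OF hab]] by simp
    moreover have "box a b \<noteq> {}"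
      using ab(2) by blast
    ultimately have "?h z0 = 0"
      using ab(2) box_subset_cbox integral_cbox_eq_0_iff[OF hab] by fastforce
    then show ?thesis
      using face_proj_prism[OF F] y rel_interior_subset unfolding z0_def by fastforce
  qed
  moreover have "closure (rel_interior (convex hull F)) = convex hull F"
    using facet_vertices_finite[OF F]
    by (simp add: convex_closure_rel_interior compact_imp_closed compact_convex_hull finite_imp_compact)
  ultimately show ?thesis
    using continuous_constant_on_closure[of "rel_interior (convex hull F)" g 0 y] g y by simp
qed

lemma continuous_on_Vh: "Vh k T u \<Longrightarrow> E \<in> T \<Longrightarrow> continuous_on S (u E)"
  unfolding Vh_def using continuous_on_polyk by blast

lemma continuous_on_Vhat:
  assumes "Vhat k T uh" "F \<in> Fh T"
  shows "continuous_on (convex hull F) (uh F)"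
proof -
  obtain p where "polyk k p" "\<forall>x\<in>convex hull F. uh F x = p x"
    using assms unfolding Vhat_def by blast
  then show ?thesis
    using continuous_on_polyk continuous_on_cong by metis
qed

lemma grad_0: "grad (\<lambda>x. 0) x = 0"
  unfolding grad_def frechet_derivative_at[OF has_derivative_const, symmetric] by (simp add: vec_eq_iff)

lemma Vhat_boundary: "Vhat k T uh \<Longrightarrow> F \<in> Fb T \<Longrightarrow> x \<in> convex hull F \<Longrightarrow> uh F x = 0"
  unfolding Vhat_def Fb_def by blast

lemma inner_matrix_vector_mult:
  fixes K :: "real^'d^'d"
  shows "(K *v g) \<bullet> w = (\<Sum>i\<in>UNIV. \<Sum>j\<in>UNIV. (K $ i $ j * w $ i) * g $ j)"
  unfolding matrix_vector_mult_def inner_vec_def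
  by (simp add: sum_distrib_left sum_distrib_right algebra_simps)

lemma polyk_kgrad_inner:
  assumes "Vh k T u" "E \<in> T"
  shows "polyk k (\<lambda>x. kgrad kappa u E x \<bullet> w)"
  unfolding kgrad_def inner_matrix_vector_mult
  using assms unfolding Vh_def
  by (intro polyk_sum polyk_cmult polyk_grad_component) simp_all

lemma continuous_on_kgrad:
  assumes "Vh k T u" "E \<in> T"
  shows "continuous_on S (kgrad kappa u E)"
proof -
  have "continuous_on S (\<lambda>x. grad (u E) x $ j)" for j
    using assms unfolding Vh_def by (blast intro: continuous_on_polyk polyk_grad_component)
  then show ?thesis
    unfolding kgrad_def[abs_def] matrix_vector_mult_def
    by (intro continuous_on_vec_lambda continuous_on_sum continuous_on_mult continuous_on_const)
qed

lemma continuous_on_jumpS [continuous_intros]: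
  "(\<And>E. E \<in> elems T F \<Longrightarrow> continuous_on S (\<phi> E)) \<Longrightarrow> continuous_on S (jumpS T F \<phi>)"
  unfolding jumpS_def[abs_def] by (intro continuous_intros)

lemma continuous_on_jumpV [continuous_intros]:
  "(\<And>E. E \<in> elems T F \<Longrightarrow> continuous_on S (b E)) \<Longrightarrow> continuous_on S (jumpV T F b)"
  unfolding jumpV_def[abs_def] by (intro continuous_intros)

lemma continuous_on_mean_star [continuous_intros]:
  fixes \<phi> :: "(real^'d) set \<Rightarrow> real^'d \<Rightarrow> 'b::real_normed_vector"
  shows "(\<And>E. E \<in> elems T F \<Longrightarrow> continuous_on S (\<phi> E)) \<Longrightarrow> continuous_on S (mean_star T tau F \<phi>)"
  unfolding mean_star_def[abs_def]
  by (cases "F \<in> Fb T") (auto intro!: continuous_on_sum continuous_on_scaleR continuous_on_const)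

lemma continuous_on_hjump [continuous_intros]:
  "continuous_on S (u E) \<Longrightarrow> continuous_on S (uh F) \<Longrightarrow> continuous_on S (hjump u uh E F)"
  unfolding hjump_def[abs_def] by (intro continuous_intros)

lemma continuous_on_sighat [continuous_intros]:
  "continuous_on S (kgrad kappa u E) \<Longrightarrow> continuous_on S (u E) \<Longrightarrow> continuous_on S (uh F)
    \<Longrightarrow> continuous_on S (sighat kappa tau u uh E F)"
  unfolding sighat_def[abs_def] by (intro continuous_intros)

section \<open>Conforming simplicial meshes\<close>

lemma elems_iff: "E \<in> elems T F \<longleftrightarrow> E \<in> T \<and> F \<in> faces E"
  unfolding elems_def by simp

locale simplicial_mesh =
  fixes T :: "(real^'d) set set"
  assumes finite_mesh: "finite T"
    and full_simplex_elements: "E \<in> T \<Longrightarrow> full_simplex E"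
    and conforming: "E1 \<in> T \<Longrightarrow> E2 \<in> T \<Longrightarrow> convex hull E1 \<inter> convex hull E2 = convex hull (E1 \<inter> E2)"
begin

lemma finite_elems: "finite (elems T F)"
  unfolding elems_def using finite_mesh by simp

lemma finite_Fh: "finite (Fh T)"
  unfolding Fh_def using finite_mesh full_simplex_elements full_simplex_finite finite_faces by auto

lemma facet_vertices_Fh: "F \<in> Fh T \<Longrightarrow> facet_vertices F"
  unfolding Fh_def using facet_vertices_face full_simplex_elements by auto

lemma nrm_inner_self: "E \<in> elems T F \<Longrightarrow> nrm E F \<bullet> nrm E F = 1"
  unfolding elems_iff faces_def using nrm_face(1) full_simplex_elements by (auto simp: norm_eq_1)

lemma bdry_pair_by_faces: "bdry_pair T G = (\<Sum>F\<in>Fh T. \<Sum>E\<in>elems T F. face_int F (G E F))"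
proof -
  have "faces E = {F \<in> Fh T. F \<in> faces E}" if "E \<in> T" for E
    using that unfolding Fh_def by blast
  then have "bdry_pair T G = (\<Sum>E\<in>T. \<Sum>F\<in>{F \<in> Fh T. F \<in> faces E}. face_int F (G E F))"
    unfolding bdry_pair_def by (intro sum.cong) auto
  also have "\<dots> = (\<Sum>F\<in>Fh T. \<Sum>E\<in>{E \<in> T. F \<in> faces E}. face_int F (G E F))"
    by (rule sum.swap_restrict[OF finite_mesh finite_Fh])
  finally show ?thesis
    unfolding elems_def .
qed

lemma face_cases:
  assumes "F \<in> Fh T"
  obtains (boundary) E where "F \<in> Fb T" "F \<notin> Fi T" "elems T F = {E}"
    | (interior) E1 E2 where "F \<in> Fi T" "F \<notin> Fb T" "elems T F = {E1, E2}" "E1 \<noteq> E2"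
        "nrm E2 F = - nrm E1 F"
proof -
  obtain E0 where E0: "E0 \<in> elems T F"
    using assms unfolding Fh_def elems_def by blast
  have opposite: "nrm Eb F = - nrm Ea F"
    if "Ea \<in> elems T F" "Eb \<in> elems T F" "Ea \<noteq> Eb" for Ea Eb
    using that opposite_normals full_simplex_elements conforming unfolding elems_iff by blast
  show ?thesis
  proof (cases "card (elems T F) = 1")
    case True
    then show ?thesis
      using boundary assms unfolding Fb_def Fi_def by (auto simp: card_1_singleton_iff)
  next
    case False
    then have "elems T F \<noteq> {E0}"
      by auto
    then obtain E1 where E1: "E1 \<in> elems T F" "E1 \<noteq> E0"
      using E0 by blast
    have "E = E0 \<or> E = E1" if E: "E \<in> elems T F" for E
    proof (rule ccontr)
      assume "\<not> (E = E0 \<or> E = E1)"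
      then have "nrm E F = - nrm E0 F" "nrm E F = - nrm E1 F" "nrm E1 F = - nrm E0 F"
        using opposite[OF E0 E] opposite[OF E1(1) E] opposite[OF E0 E1(1)] E1(2) by metis+
      then have "nrm E0 F \<bullet> nrm E0 F = - (nrm E0 F \<bullet> nrm E0 F)"
        by (metis minus_minus inner_minus_right)
      then show False
        using nrm_inner_self[OF E0] by simp
    qed
    then have el: "elems T F = {E0, E1}"
      using E0 E1 by blast
    then have "F \<in> Fi T" "F \<notin> Fb T"
      using assms E1(2) unfolding Fi_def Fb_def by auto
    then show ?thesis
      using interior[OF _ _ el E1(2)[symmetric]] opposite[OF E0 E1(1) E1(2)[symmetric]] by blast
  qed
qed

lemma bdry_pair_eq_face_integrals:
  assumes G: "\<And>F E. F \<in> Fh T \<Longrightarrow> E \<in> elems T F \<Longrightarrow> continuous_on (convex hull F) (G E F)"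
    and A: "\<And>F. F \<in> Fh T \<Longrightarrow> continuous_on (convex hull F) (A F)"
    and B: "\<And>F. F \<in> Fh T \<Longrightarrow> continuous_on (convex hull F) (B F)"
    and pointwise: "\<And>F x. F \<in> Fh T \<Longrightarrow> x \<in> convex hull F \<Longrightarrow> (\<Sum>E\<in>elems T F. G E F x) = A F x + B F x"
  shows "bdry_pair T G = (\<Sum>F\<in>Fh T. face_int F (A F)) + (\<Sum>F\<in>Fh T. face_int F (B F))"
proof -
  have "(\<Sum>E\<in>elems T F. face_int F (G E F)) = face_int F (A F) + face_int F (B F)"
    if F: "F \<in> Fh T" for F
  proof -
    note FV = facet_vertices_Fh[OF F]
    have "(\<Sum>E\<in>elems T F. face_int F (G E F)) = face_int F (\<lambda>x. \<Sum>E\<in>elems T F. G E F x)"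
      using face_int_sum[OF FV finite_elems G[OF F]] by simp
    also have "\<dots> = face_int F (\<lambda>x. A F x + B F x)"
      by (rule face_int_cong[OF FV pointwise[OF F]])
    also have "\<dots> = face_int F (A F) + face_int F (B F)"
      by (rule face_int_add[OF FV A[OF F] B[OF F]])
    finally show ?thesis .
  qed
  then show ?thesis
    unfolding bdry_pair_by_faces by (simp add: sum.distrib)
qed

end

section \<open>Face identities for the hybridized scheme\<close>

lemma hybrid_trace_elimination:
  fixes a1 a2 b1 b2 u1 u2 U v1 v2 V t1 t2 :: real
  assumes "t1 + t2 \<noteq> 0" and "- a1 + t1 * (u1 - U) + a2 + t2 * (u2 - U) = 0"
  shows "(u2 - U) * b2 - (u1 - U) * b1
      = - ((1 - t1 / (t1 + t2)) * b1 + (1 - t2 / (t1 + t2)) * b2) * (u1 - u2)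
        - 1 / (t1 + t2) * (a1 - a2) * (b1 - b2)"
    and "(- a1 + t1 * (u1 - U)) * (v1 - V) + (a2 + t2 * (u2 - U)) * (v2 - V)
      = - ((1 - t1 / (t1 + t2)) * a1 + (1 - t2 / (t1 + t2)) * a2) * (v1 - v2)
        + t1 * t2 / (t1 + t2) * ((u1 - u2) * (v1 - v2))"
proof -
  \<comment> \<open>the second assumption forces U = (t1 u1 + t2 u2 - a1 + a2) / (t1 + t2); with r = 1 / (t1 + t2)
    both claims become polynomial consequences of the assumptions and of r (t1 + t2) = 1\<close>
  define r where "r = 1 / (t1 + t2)"
  have "r * (t1 + t2) = 1"
    using assms(1) unfolding r_def by simp
  then show "(u2 - U) * b2 - (u1 - U) * b1
      = - ((1 - t1 / (t1 + t2)) * b1 + (1 - t2 / (t1 + t2)) * b2) * (u1 - u2)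
        - 1 / (t1 + t2) * (a1 - a2) * (b1 - b2)"
    and "(- a1 + t1 * (u1 - U)) * (v1 - V) + (a2 + t2 * (u2 - U)) * (v2 - V)
      = - ((1 - t1 / (t1 + t2)) * a1 + (1 - t2 / (t1 + t2)) * a2) * (v1 - v2)
        + t1 * t2 / (t1 + t2) * ((u1 - u2) * (v1 - v2))"
    using assms(2) unfolding divide_inverse r_def[unfolded divide_inverse mult_1, symmetric] by algebra+
qed

lemma sighat_inner_nrm:
  "nrm E F \<bullet> nrm E F = 1 \<Longrightarrow>
    sighat kappa tau u uh E F x \<bullet> nrm E F = - (kgrad kappa u E x \<bullet> nrm E F) + tau E F * (u E x - uh F x)"
  unfolding sighat_def hjump_def by (simp add: inner_add_left inner_diff_left)

lemma boundary_face_consistency: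
  assumes "elems T F = {E}" "F \<in> Fb T" "uh F x = 0"
  shows "(\<Sum>E\<in>elems T F. (- kgrad kappa v E x) \<bullet> hjump u uh E F x)
    = - (mean_star T tau F (kgrad kappa v) x \<bullet> jumpS T F u x)"
  using assms unfolding hjump_def mean_star_def jumpS_def by simp

lemma boundary_face_penalty:
  assumes "elems T F = {E}" "F \<in> Fb T" "uh F x = 0" "vh F x = 0" "nrm E F \<bullet> nrm E F = 1"
  shows "(\<Sum>E\<in>elems T F. sighat kappa tau u uh E F x \<bullet> hjump v vh E F x)
    = - (mean_star T tau F (kgrad kappa u) x \<bullet> jumpS T F v x) + rho0 T tau F * (jumpS T F u x \<bullet> jumpS T F v x)"
  using assms unfolding sighat_def hjump_def mean_star_def jumpS_def rho0_def
  by (simp add: inner_add_left algebra_simps)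

lemma interior_face_consistency:
  assumes el: "elems T F = {E1, E2}" "E1 \<noteq> E2" and nb: "F \<notin> Fb T"
    and n: "nrm E2 F = - nrm E1 F" "nrm E1 F \<bullet> nrm E1 F = 1"
    and tau: "tau E1 F + tau E2 F \<noteq> 0"
    and conservation: "(\<Sum>E\<in>elems T F. sighat kappa tau u uh E F x \<bullet> nrm E F) = 0"
  shows "(\<Sum>E\<in>elems T F. (- kgrad kappa v E x) \<bullet> hjump u uh E F x)
    = - (mean_star T tau F (kgrad kappa v) x \<bullet> jumpS T F u x)
      - rho1 T tau F * jumpV T F (kgrad kappa u) x * jumpV T F (kgrad kappa v) x"
proof -
  let ?n = "nrm E1 F" and ?U = "uh F x" and ?s = "tau E1 F + tau E2 F"
  let ?b1 = "kgrad kappa v E1 x \<bullet> ?n" and ?b2 = "kgrad kappa v E2 x \<bullet> ?n"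
  have "sighat kappa tau u uh E2 F x \<bullet> nrm E2 F
      = - (kgrad kappa u E2 x \<bullet> nrm E2 F) + tau E2 F * (u E2 x - ?U)"
    using n by (intro sighat_inner_nrm) simp
  then have H: "- (kgrad kappa u E1 x \<bullet> ?n) + tau E1 F * (u E1 x - ?U)
      + (kgrad kappa u E2 x \<bullet> ?n) + tau E2 F * (u E2 x - ?U) = 0"
    using conservation sighat_inner_nrm[OF n(2)] el n by simp
  have "(\<Sum>E\<in>elems T F. (- kgrad kappa v E x) \<bullet> hjump u uh E F x)
      = (u E2 x - ?U) * ?b2 - (u E1 x - ?U) * ?b1"
    using el n unfolding hjump_def by (simp add: algebra_simps)
  also have "\<dots> = - ((1 - tau E1 F / ?s) * ?b1 + (1 - tau E2 F / ?s) * ?b2) * (u E1 x - u E2 x)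
      - 1 / ?s * (kgrad kappa u E1 x \<bullet> ?n - kgrad kappa u E2 x \<bullet> ?n) * (?b1 - ?b2)"
    by (rule hybrid_trace_elimination(1)[OF tau H])
  also have "\<dots> = - (mean_star T tau F (kgrad kappa v) x \<bullet> jumpS T F u x)
      - rho1 T tau F * jumpV T F (kgrad kappa u) x * jumpV T F (kgrad kappa v) x"
    using el n nb unfolding mean_star_def jumpS_def jumpV_def rho1_def
    by (simp add: inner_add_left inner_add_right inner_diff_right algebra_simps diff_divide_distrib)
  finally show ?thesis .
qed

lemma interior_face_penalty:
  assumes el: "elems T F = {E1, E2}" "E1 \<noteq> E2" and nb: "F \<notin> Fb T"
    and n: "nrm E2 F = - nrm E1 F" "nrm E1 F \<bullet> nrm E1 F = 1"
    and tau: "tau E1 F + tau E2 F \<noteq> 0"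
    and conservation: "(\<Sum>E\<in>elems T F. sighat kappa tau u uh E F x \<bullet> nrm E F) = 0"
  shows "(\<Sum>E\<in>elems T F. sighat kappa tau u uh E F x \<bullet> hjump v vh E F x)
    = - (mean_star T tau F (kgrad kappa u) x \<bullet> jumpS T F v x) + rho0 T tau F * (jumpS T F u x \<bullet> jumpS T F v x)"
proof -
  let ?n = "nrm E1 F" and ?U = "uh F x" and ?s = "tau E1 F + tau E2 F"
  let ?a1 = "kgrad kappa u E1 x \<bullet> ?n" and ?a2 = "kgrad kappa u E2 x \<bullet> ?n"
  have "sighat kappa tau u uh E2 F x \<bullet> nrm E2 F
      = - (kgrad kappa u E2 x \<bullet> nrm E2 F) + tau E2 F * (u E2 x - ?U)"
    using n by (intro sighat_inner_nrm) simp
  then have H: "- ?a1 + tau E1 F * (u E1 x - ?U) + ?a2 + tau E2 F * (u E2 x - ?U) = 0"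
    using conservation sighat_inner_nrm[OF n(2)] el n by simp
  have "(\<Sum>E\<in>elems T F. sighat kappa tau u uh E F x \<bullet> hjump v vh E F x)
      = (- ?a1 + tau E1 F * (u E1 x - ?U)) * (v E1 x - vh F x)
        + (?a2 + tau E2 F * (u E2 x - ?U)) * (v E2 x - vh F x)"
    using el n unfolding sighat_def hjump_def
    by (simp add: inner_add_left inner_diff_left algebra_simps)
  also have "\<dots> = - ((1 - tau E1 F / ?s) * ?a1 + (1 - tau E2 F / ?s) * ?a2) * (v E1 x - v E2 x)
      + tau E1 F * tau E2 F / ?s * ((u E1 x - u E2 x) * (v E1 x - v E2 x))"
    by (rule hybrid_trace_elimination(2)[OF tau H])
  also have "\<dots> = - (mean_star T tau F (kgrad kappa u) x \<bullet> jumpS T F v x)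
      + rho0 T tau F * (jumpS T F u x \<bullet> jumpS T F v x)"
    using el n nb unfolding mean_star_def jumpS_def rho0_def
    by (simp add: inner_add_left inner_add_right inner_diff_right algebra_simps diff_divide_distrib)
  finally show ?thesis .
qed

section \<open>Positivity of the stabilization\<close>

lemma centroid_in_interior:
  fixes E :: "(real^'d) set"
  assumes "full_simplex E" shows "centroid E \<in> interior (convex hull E)"
proof -
  let ?w = "\<lambda>_. 1 / real (card E)"
  have card: "card E = CARD('d) + 1"
    using assms unfolding full_simplex_def by simp
  have hull: "interior (convex hull E) = {y. \<exists>u. (\<forall>x\<in>E. 0 < u x) \<and> sum u E = 1 \<and> (\<Sum>x\<in>E. u x *\<^sub>R x) = y}"
    using interior_convex_hull_explicit_minimal[of E] assms card unfolding full_simplex_def by simp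
  have "(\<forall>x\<in>E. 0 < ?w x) \<and> sum ?w E = 1 \<and> (\<Sum>x\<in>E. ?w x *\<^sub>R x) = centroid E"
    using card unfolding centroid_def by (simp add: scaleR_sum_right)
  then show ?thesis
    unfolding hull by (intro CollectI exI)
qed

lemma kE_coercive:
  assumes E: "full_simplex E" and sub: "interior (convex hull E) \<subseteq> \<Omega>"
    and ae: "AE x in lebesgue. x \<in> \<Omega> \<longrightarrow> (\<forall>\<xi>. kmin * (norm \<xi>)^2 \<le> \<xi> \<bullet> (kappa x *v \<xi>))"
    and const: "\<forall>x\<in>interior (convex hull E). kappa x = K"
  shows "kmin * (norm \<xi>)^2 \<le> \<xi> \<bullet> (kE kappa E *v \<xi>)"
proof -
  let ?I = "interior (convex hull E)" and ?P = "\<forall>\<xi>. kmin * (norm \<xi>)^2 \<le> \<xi> \<bullet> (K *v \<xi>)"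
  have c: "centroid E \<in> ?I"
    by (rule centroid_in_interior[OF E])
  have "AE x \<in> ?I in lebesgue. x \<in> {x. ?P}"
    by (rule AE_mp[OF ae AE_I2]) (use sub const in auto)
  \<comment> \<open>{x. ?P} is empty or UNIV, hence closed, so the a.e. bound transfers to every point of the open set ?I\<close>
  moreover have "closed {x::real^'d. ?P}"
    by (cases ?P) auto
  ultimately have ?P
    using mem_closed_if_AE_lebesgue_open[OF open_interior _ _ c] by blast
  moreover have "kE kappa E = K"
    unfolding kE_def using const c by simp
  ultimately show ?thesis
    by simp
qed

lemma hE_pos:
  assumes "full_simplex E" shows "0 < hE E"
proof -
  have "card E \<ge> 2"
    using assms unfolding full_simplex_def by simp
  then obtain p q where pq: "p \<in> E" "q \<in> E" "p \<noteq> q"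
    using card_le_Suc0_iff_eq[OF full_simplex_finite[OF assms]] by fastforce
  have "bounded (convex hull E)"
    using full_simplex_finite[OF assms] by (simp add: compact_imp_bounded compact_convex_hull finite_imp_compact)
  then have "dist p q \<le> hE E"
    unfolding hE_def using pq(1,2) by (intro diameter_bounded_bound) (simp_all add: hull_inc)
  moreover have "0 < dist p q"
    using pq(3) by simp
  ultimately show ?thesis
    by linarith
qed

lemma tauf_pos:
  assumes "0 < \<alpha>0" "0 < CT" "0 < kmin" and E: "full_simplex E" "F \<in> faces E"
    and coercive: "\<And>\<xi>. kmin * (norm \<xi>)^2 \<le> \<xi> \<bullet> (kE kappa E *v \<xi>)"
  shows "0 < tauf \<alpha>0 CT kappa E F"
proof -
  obtain q where "q \<in> E" "F = E - {q}"
    using E(2) unfolding faces_def by blast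
  then have "norm (nrm E F) = 1"
    using nrm_face(1)[OF E(1)] by blast
  then have "0 < nrm E F \<bullet> (kE kappa E *v nrm E F)"
    using coercive[of "nrm E F"] \<open>0 < kmin\<close> by simp
  then show ?thesis
    unfolding tauf_def using assms(1,2) hE_pos[OF E(1)] by simp
qed

section \<open>Conservation of the numerical flux and the main theorem\<close>

context simplicial_mesh
begin

lemma bdry_pair_face_test_function:
  assumes u: "Vh k T u" and uh: "Vhat k T uh" and F: "F \<in> Fh T"
    and Q: "continuous_on (convex hull F) Q"
    and flux: "\<And>x. x \<in> convex hull F \<Longrightarrow> (\<Sum>E\<in>elems T F. sighat kappa tau u uh E F x \<bullet> nrm E F) = Q x"
  shows "bdry_pair T (\<lambda>E G x. sighat kappa tau u uh E G x
      \<bullet> hjump (\<lambda>E x. 0) (\<lambda>G. if G = F then Q else (\<lambda>x. 0)) E G x) = - face_int F (\<lambda>x. Q x * Q x)"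
proof -
  define vh where "vh G = (if G = F then Q else (\<lambda>x. 0))" for G
  have "bdry_pair T (\<lambda>E G x. sighat kappa tau u uh E G x \<bullet> hjump (\<lambda>E x. 0) vh E G x)
      = (\<Sum>G\<in>Fh T. face_int G (if G = F then (\<lambda>x. - (Q x * Q x)) else (\<lambda>x. 0)))
        + (\<Sum>G\<in>Fh T. face_int G (\<lambda>x. 0))"
  proof (rule bdry_pair_eq_face_integrals)
    fix G x assume G: "G \<in> Fh T" and x: "x \<in> convex hull G"
    have "(\<Sum>E\<in>elems T G. sighat kappa tau u uh E G x \<bullet> hjump (\<lambda>E x. 0) vh E G x)
        = - vh G x * (\<Sum>E\<in>elems T G. sighat kappa tau u uh E G x \<bullet> nrm E G)"
      unfolding hjump_def by (simp add: sum_distrib_left)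
    then show "(\<Sum>E\<in>elems T G. sighat kappa tau u uh E G x \<bullet> hjump (\<lambda>E x. 0) vh E G x)
        = (if G = F then (\<lambda>x. - (Q x * Q x)) else (\<lambda>x. 0)) x + 0"
      using flux x unfolding vh_def by auto
  next
    fix G E assume G: "G \<in> Fh T" and E: "E \<in> elems T G"
    then have "E \<in> T"
      by (simp add: elems_iff)
    have "continuous_on (convex hull G) (vh G)"
      unfolding vh_def using Q by simp
    then show "continuous_on (convex hull G) (\<lambda>x. sighat kappa tau u uh E G x \<bullet> hjump (\<lambda>E x. 0) vh E G x)"
      using continuous_on_kgrad[OF u \<open>E \<in> T\<close>] continuous_on_Vh[OF u \<open>E \<in> T\<close>] continuous_on_Vhat[OF uh G]
      by (intro continuous_intros)
  qed (use Q in \<open>auto intro!: continuous_intros\<close>)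
  then show ?thesis
    unfolding vh_def using F finite_Fh
    by (simp add: if_distrib face_int_0 face_int_uminus sum.delta cong: if_cong)
qed

lemma normal_flux_conservation:
  assumes u: "Vh k T u" and uh: "Vhat k T uh"
    and solves: "\<forall>v vh. Vh k T v \<and> Vhat k T vh \<longrightarrow>
         aH T kappa tau eps u uh v vh = (\<Sum>E\<in>T. integral (convex hull E) (\<lambda>x. f x * v E x))"
    and F: "F \<in> Fi T" and y: "y \<in> convex hull F"
  shows "(\<Sum>E\<in>elems T F. sighat kappa tau u uh E F y \<bullet> nrm E F) = 0"
proof -
  have F': "F \<in> Fh T" "F \<notin> Fb T"
    using F unfolding Fi_def Fb_def by auto
  obtain p where p: "polyk k p" "\<forall>x\<in>convex hull F. uh F x = p x"
    using uh F' unfolding Vhat_def by blast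
  define Q where "Q x = (\<Sum>E\<in>elems T F. tau E F * (u E x - p x) - kgrad kappa u E x \<bullet> nrm E F)" for x
  have Q: "(\<Sum>E\<in>elems T F. sighat kappa tau u uh E F x \<bullet> nrm E F) = Q x" if "x \<in> convex hull F" for x
    unfolding Q_def using that p(2) sighat_inner_nrm[OF nrm_inner_self] by (intro sum.cong) auto
  have polyQ: "polyk k Q"
    unfolding Q_def[abs_def] using u p(1)
    by (intro polyk_sum finite_elems polyk_diff polyk_cmult polyk_kgrad_inner)
      (auto simp: Vh_def elems_iff)
  \<comment> \<open>the hybrid test function Q on F (and 0 elsewhere) is admissible because F is not a boundary face\<close>
  have "Vhat k T (\<lambda>G. if G = F then Q else (\<lambda>x. 0))"
    unfolding Vhat_def using polyQ polyk_0 F'(2) by auto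
  moreover have "Vh k T (\<lambda>E x. 0)"
    unfolding Vh_def by (simp add: polyk_0)
  ultimately have "aH T kappa tau eps u uh (\<lambda>E x. 0) (\<lambda>G. if G = F then Q else (\<lambda>x. 0)) = 0"
    using solves by simp
  then have "face_int F (\<lambda>x. Q x * Q x) = 0"
    unfolding aH_def kgrad_def grad_0
    using bdry_pair_face_test_function[OF u uh F'(1) continuous_on_polyk[OF polyQ] Q]
    by (simp add: bdry_pair_def face_int_0)
  then have "Q y = 0"
    by (rule face_int_square_eq_0D[OF facet_vertices_Fh[OF F'(1)] continuous_on_polyk[OF polyQ] _ y])
  then show ?thesis
    using Q[OF y] by simp
qed

lemma sum_Fh_if_Fi: "(\<Sum>F\<in>Fh T. if F \<in> Fi T then g F else 0) = (\<Sum>F\<in>Fi T. g F)"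
proof -
  have "{F \<in> Fh T. F \<in> Fi T} = Fi T"
    unfolding Fi_def by blast
  then show ?thesis
    using sum.inter_filter[OF finite_Fh, of g "\<lambda>F. F \<in> Fi T"] by simp
qed

lemma tau_sum_nonzero:
  fixes tau :: "(real^'d) set \<Rightarrow> (real^'d) set \<Rightarrow> real"
  assumes "\<And>E F. E \<in> T \<Longrightarrow> F \<in> faces E \<Longrightarrow> tau E F > 0" "elems T F = {E1, E2}"
  shows "tau E1 F + tau E2 F \<noteq> 0"
proof -
  have "E1 \<in> elems T F" "E2 \<in> elems T F"
    using assms(2) by simp_all
  then show ?thesis
    using assms(1)[of E1 F] assms(1)[of E2 F] unfolding elems_iff by fastforce
qed

lemma consistency_integrand_on_face:
  assumes tau: "\<And>E F. E \<in> T \<Longrightarrow> F \<in> faces E \<Longrightarrow> tau E F > 0" and uh: "Vhat k T uh"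
    and conservation: "\<And>F x. F \<in> Fi T \<Longrightarrow> x \<in> convex hull F \<Longrightarrow>
      (\<Sum>E\<in>elems T F. sighat kappa tau u uh E F x \<bullet> nrm E F) = 0"
    and F: "F \<in> Fh T" and x: "x \<in> convex hull F"
  shows "(\<Sum>E\<in>elems T F. (- kgrad kappa v E x) \<bullet> hjump u uh E F x)
    = - (mean_star T tau F (kgrad kappa v) x \<bullet> jumpS T F u x)
      + (if F \<in> Fi T then - (rho1 T tau F * jumpV T F (kgrad kappa u) x * jumpV T F (kgrad kappa v) x)
         else 0)"
  using F
proof (cases rule: face_cases)
  case (boundary E)
  then show ?thesis
    using boundary_face_consistency[where uh = uh and x = x, OF boundary(3,1)
        Vhat_boundary[OF uh boundary(1) x]] by simp
next
  case (interior E1 E2)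
  have "E1 \<in> elems T F"
    using interior(3) by simp
  then show ?thesis
    using interior_face_consistency[OF interior(3,4,2,5) nrm_inner_self
        tau_sum_nonzero[where tau = tau, OF tau interior(3)] conservation[OF interior(1) x]] interior(1)
    by simp
qed

lemma penalty_integrand_on_face:
  assumes tau: "\<And>E F. E \<in> T \<Longrightarrow> F \<in> faces E \<Longrightarrow> tau E F > 0"
    and uh: "Vhat k T uh" and vh: "Vhat k' T vh"
    and conservation: "\<And>F x. F \<in> Fi T \<Longrightarrow> x \<in> convex hull F \<Longrightarrow>
      (\<Sum>E\<in>elems T F. sighat kappa tau u uh E F x \<bullet> nrm E F) = 0"
    and F: "F \<in> Fh T" and x: "x \<in> convex hull F"
  shows "(\<Sum>E\<in>elems T F. sighat kappa tau u uh E F x \<bullet> hjump v vh E F x)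
    = - (mean_star T tau F (kgrad kappa u) x \<bullet> jumpS T F v x)
      + rho0 T tau F * (jumpS T F u x \<bullet> jumpS T F v x)"
  using F
proof (cases rule: face_cases)
  case (boundary E)
  then show ?thesis
    using boundary_face_penalty[where uh = uh and vh = vh and x = x, OF boundary(3,1)
        Vhat_boundary[OF uh boundary(1) x] Vhat_boundary[OF vh boundary(1) x] nrm_inner_self]
    by simp
next
  case (interior E1 E2)
  have "E1 \<in> elems T F"
    using interior(3) by simp
  then show ?thesis
    using interior_face_penalty[OF interior(3,4,2,5) nrm_inner_self
        tau_sum_nonzero[where tau = tau, OF tau interior(3)] conservation[OF interior(1) x]] interior(1)
    by simp
qed

lemma consistency_term_by_faces:
  assumes tau: "\<And>E F. E \<in> T \<Longrightarrow> F \<in> faces E \<Longrightarrow> tau E F > 0"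
    and u: "Vh k T u" and uh: "Vhat k T uh" and v: "Vh k' T v"
    and conservation: "\<And>F x. F \<in> Fi T \<Longrightarrow> x \<in> convex hull F \<Longrightarrow>
      (\<Sum>E\<in>elems T F. sighat kappa tau u uh E F x \<bullet> nrm E F) = 0"
  shows "bdry_pair T (\<lambda>E F x. (- kgrad kappa v E x) \<bullet> hjump u uh E F x)
    = - (\<Sum>F\<in>Fh T. face_int F (\<lambda>x. mean_star T tau F (kgrad kappa v) x \<bullet> jumpS T F u x))
      - (\<Sum>F\<in>Fi T. face_int F (\<lambda>x.
          rho1 T tau F * jumpV T F (kgrad kappa u) x * jumpV T F (kgrad kappa v) x))"
proof -
  let ?J = "\<lambda>F x. rho1 T tau F * jumpV T F (kgrad kappa u) x * jumpV T F (kgrad kappa v) x"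
  have cont: "continuous_on S (kgrad kappa u E)" "continuous_on S (u E)" "continuous_on S (kgrad kappa v E)"
    if "E \<in> elems T F" for E F S
    using that continuous_on_kgrad[OF u] continuous_on_Vh[OF u] continuous_on_kgrad[OF v]
    by (simp_all add: elems_iff)
  have "bdry_pair T (\<lambda>E F x. (- kgrad kappa v E x) \<bullet> hjump u uh E F x)
      = (\<Sum>F\<in>Fh T. face_int F (\<lambda>x. - (mean_star T tau F (kgrad kappa v) x \<bullet> jumpS T F u x)))
        + (\<Sum>F\<in>Fh T. face_int F (if F \<in> Fi T then (\<lambda>x. - ?J F x) else (\<lambda>x. 0)))"
  proof (rule bdry_pair_eq_face_integrals)
    fix F E assume "F \<in> Fh T" "E \<in> elems T F"
    then show "continuous_on (convex hull F) (\<lambda>x. (- kgrad kappa v E x) \<bullet> hjump u uh E F x)"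
      using cont continuous_on_Vhat[OF uh] by (intro continuous_intros) auto
  qed (use consistency_integrand_on_face[OF tau uh conservation] cont
       in \<open>auto intro!: continuous_intros\<close>)
  then show ?thesis
    by (simp add: if_distrib face_int_uminus face_int_0 sum_negf sum_Fh_if_Fi cong: if_cong)
qed

lemma penalty_term_by_faces:
  assumes tau: "\<And>E F. E \<in> T \<Longrightarrow> F \<in> faces E \<Longrightarrow> tau E F > 0"
    and u: "Vh k T u" and uh: "Vhat k T uh" and v: "Vh k' T v" and vh: "Vhat k' T vh"
    and conservation: "\<And>F x. F \<in> Fi T \<Longrightarrow> x \<in> convex hull F \<Longrightarrow>
      (\<Sum>E\<in>elems T F. sighat kappa tau u uh E F x \<bullet> nrm E F) = 0"
  shows "bdry_pair T (\<lambda>E F x. sighat kappa tau u uh E F x \<bullet> hjump v vh E F x)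
    = - (\<Sum>F\<in>Fh T. face_int F (\<lambda>x. mean_star T tau F (kgrad kappa u) x \<bullet> jumpS T F v x))
      + (\<Sum>F\<in>Fh T. face_int F (\<lambda>x. rho0 T tau F * (jumpS T F u x \<bullet> jumpS T F v x)))"
proof -
  have cont: "continuous_on S (kgrad kappa u E)" "continuous_on S (u E)" "continuous_on S (v E)"
    if "E \<in> elems T F" for E F S
    using that continuous_on_kgrad[OF u] continuous_on_Vh[OF u] continuous_on_Vh[OF v]
    by (simp_all add: elems_iff)
  have "bdry_pair T (\<lambda>E F x. sighat kappa tau u uh E F x \<bullet> hjump v vh E F x)
      = (\<Sum>F\<in>Fh T. face_int F (\<lambda>x. - (mean_star T tau F (kgrad kappa u) x \<bullet> jumpS T F v x)))
        + (\<Sum>F\<in>Fh T. face_int F (\<lambda>x. rho0 T tau F * (jumpS T F u x \<bullet> jumpS T F v x)))"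
  proof (rule bdry_pair_eq_face_integrals)
    fix F E assume "F \<in> Fh T" "E \<in> elems T F"
    then show "continuous_on (convex hull F) (\<lambda>x. sighat kappa tau u uh E F x \<bullet> hjump v vh E F x)"
      using cont continuous_on_Vhat[OF uh] continuous_on_Vhat[OF vh] by (intro continuous_intros) auto
  qed (use penalty_integrand_on_face[OF tau uh vh conservation] cont
       in \<open>auto intro!: continuous_intros\<close>)
  then show ?thesis
    by (simp add: face_int_uminus sum_negf)
qed

end

theorem mainTheorem3:
  fixes T :: "(real^'d) set set" and \<Omega> :: "(real^'d) set"
    and kappa :: "real^'d \<Rightarrow> real^'d^'d" and kmin kmax :: real
    and k :: nat and \<alpha>0 CT eps :: real and f :: "real^'d \<Rightarrow> real"
    and u uh :: "(real^'d) set \<Rightarrow> real^'d \<Rightarrow> real"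
  assumes dim: "CARD('d) \<in> {2, 3}"
    and mesh_fin: "finite T" and mesh_ne: "T \<noteq> {}"
    and simplex: "\<forall>E\<in>T. card E = CARD('d) + 1 \<and> \<not> affine_dependent E"
    and conforming: "\<forall>E1\<in>T. \<forall>E2\<in>T. convex hull E1 \<inter> convex hull E2 = convex hull (E1 \<inter> E2)"
    and domain: "\<Omega> = interior (\<Union>E\<in>T. convex hull E)" and conn: "connected \<Omega>"
    and hle1: "\<forall>E\<in>T. hE E \<le> 1"
    and kpos: "0 < kmin" and kle: "kmin \<le> kmax"
    and kappa_ae: "AE x in lebesgue. x \<in> \<Omega> \<longrightarrow> transpose (kappa x) = kappa x \<and>
         (\<forall>\<xi>. kmin * (norm \<xi>)^2 \<le> \<xi> \<bullet> (kappa x *v \<xi>) \<and> \<xi> \<bullet> (kappa x *v \<xi>) \<le> kmax * (norm \<xi>)^2)"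
    and kappa_pw: "\<forall>E\<in>T. \<exists>K. \<forall>x\<in>interior (convex hull E). kappa x = K"
    and k1: "k \<ge> 1"
    and CTpos: "CT > 0"
    and trace_ineq: "\<forall>E\<in>T. \<forall>F\<in>faces E. \<forall>w. polyk k w \<longrightarrow>
         face_int F (\<lambda>x. (w x)^2) \<le> CT^2 / hE E * integral (convex hull E) (\<lambda>x. (w x)^2)"
    and a0: "\<alpha>0 > 0"
    and eps: "eps \<in> {-1, 0, 1}"
    and fL2: "f measurable_on \<Omega>" "(\<lambda>x. (f x)^2) integrable_on \<Omega>"
    and uVh: "Vh k T u" and uhV: "Vhat k T uh"
    and solves: "\<forall>v vh. Vh k T v \<and> Vhat k T vh \<longrightarrow>
         aH T kappa (tauf \<alpha>0 CT kappa) eps u uh v vh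
           = (\<Sum>E\<in>T. integral (convex hull E) (\<lambda>x. f x * v E x))"
  shows "\<forall>v vh. Vh k T v \<and> Vhat k T vh \<longrightarrow>
      bdry_pair T (\<lambda>E F x. (- kgrad kappa v E x) \<bullet> hjump u uh E F x)
        = - (\<Sum>F\<in>Fh T. face_int F (\<lambda>x.
               mean_star T (tauf \<alpha>0 CT kappa) F (kgrad kappa v) x \<bullet> jumpS T F u x))
          - (\<Sum>F\<in>Fi T. face_int F (\<lambda>x.
               rho1 T (tauf \<alpha>0 CT kappa) F * jumpV T F (kgrad kappa u) x * jumpV T F (kgrad kappa v) x))
    \<and> bdry_pair T (\<lambda>E F x. sighat kappa (tauf \<alpha>0 CT kappa) u uh E F x \<bullet> hjump v vh E F x)
        = - (\<Sum>F\<in>Fh T. face_int F (\<lambda>x.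
               mean_star T (tauf \<alpha>0 CT kappa) F (kgrad kappa u) x \<bullet> jumpS T F v x))
          + (\<Sum>F\<in>Fh T. face_int F (\<lambda>x.
               rho0 T (tauf \<alpha>0 CT kappa) F * (jumpS T F u x \<bullet> jumpS T F v x)))"
proof -
  interpret simplicial_mesh T
    using mesh_fin simplex conforming by unfold_locales (auto simp: full_simplex_def)
  have coercive: "kmin * (norm \<xi>)^2 \<le> \<xi> \<bullet> (kE kappa E *v \<xi>)" if E: "E \<in> T" for E \<xi>
  proof -
    obtain K where "\<forall>x\<in>interior (convex hull E). kappa x = K"
      using kappa_pw E by blast
    moreover have "interior (convex hull E) \<subseteq> \<Omega>"
      unfolding domain using E by (intro interior_mono) blast
    moreover have "AE x in lebesgue. x \<in> \<Omega> \<longrightarrow> (\<forall>\<xi>. kmin * (norm \<xi>)^2 \<le> \<xi> \<bullet> (kappa x *v \<xi>))"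
      by (rule AE_mp[OF kappa_ae AE_I2]) blast
    ultimately show ?thesis
      using kE_coercive full_simplex_elements[OF E] by blast
  qed
  have tau_pos: "0 < tauf \<alpha>0 CT kappa E F" if "E \<in> T" "F \<in> faces E" for E F
    using tauf_pos[OF a0 CTpos kpos full_simplex_elements] coercive that by blast
  note conservation = normal_flux_conservation[OF uVh uhV solves]
  show ?thesis
    using consistency_term_by_faces[OF tau_pos uVh uhV _ conservation]
      penalty_term_by_faces[OF tau_pos uVh uhV _ _ conservation] by blast
qed

end
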